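(* For every set of formulas $\Gamma$ and formula $\alpha$: $\Gamma\vdash_{LFI3}\alpha$ (derivability in the Hilbert calculus LFI3) if and only if $\Gamma\vDash_{LFI3}\alpha$ (consequence in the five-valued LFI3 matrix).
   Context: Formulas are built from a countable set of propositional variables using unary $\neg,\circ$ and binary $\land,\lor,\to$; $\alpha\leftrightarrow\beta:=(\alpha\to\beta)\land(\beta\to\alpha)$, $\sim\alpha:=\neg\alpha\land\circ\alpha$. mbC is the Hilbert calculus with the axiom schemas of a standard axiomatization of positive classical propositional logic in $\land,\lor,\to$, plus $\alpha\lor\neg\alpha$ and $\circ\alpha\to(\alpha\to(\neg\alpha\to\beta))$, with modus ponens as only rule. The Hilbert calculus LFI3 is mbC plus the schemas $\circ\alpha\lor(\alpha\land\neg\alpha)$, $\circ\circ\circ\alpha$, $\neg\neg\alpha\to\alpha$, $\alpha\to\neg\neg\alpha$, $\neg\circ\neg\alpha\leftrightarrow\neg\circ\alpha$, and: A1 $\neg(\alpha\land\beta)\leftrightarrow(\neg\alpha\lor\neg\beta)$; A2 $\neg(\alpha\lor\beta)\leftrightarrow(\neg\alpha\land\neg\beta)$; A3 $\neg(\alpha\to\beta)\leftrightarrow(\neg\beta\land(\sim\neg\alpha\lor\neg\circ\alpha))$; A4 $\neg\circ(\alpha\land\beta)\leftrightarrow(((\sim\neg\alpha\land\neg\circ\beta)\lor(\neg\circ\alpha\land\sim\neg\beta))\lor(\neg\circ\alpha\land\neg\circ\beta))$; A5 $\neg\circ(\alpha\lor\beta)\leftrightarrow(((\sim\alpha\land\neg\circ\beta)\lor(\neg\circ\alpha\land\sim\beta))\lor(\neg\circ\alpha\land\neg\circ\beta))$;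 A6 $\neg\circ(\alpha\to\beta)\leftrightarrow((\sim\neg\alpha\land\neg\circ\beta)\lor(\sim\neg\alpha\land\neg\circ\alpha\land\sim\beta)\lor(\neg\circ\alpha\land\neg\circ\beta)\lor(\sim\alpha\land\neg\circ\alpha\land\sim\beta))$. Semantics: on $\{0,1\}$ use Boolean $\land,\lor,\to,\sim$. Let $\mathbb{B}=\{x\in\{0,1\}^3: x_1\lor x_2=1,\ x_3\lor\sim(x_1\land x_2)=1\}$ (five elements). The LFI3 algebra on $\mathbb{B}$: $a\dot\land b=(a_1\land b_1,\ a_2\lor b_2,\ (\sim a_2\land b_3)\lor(a_3\land\sim b_2)\lor(a_3\land b_3))$; $a\dot\lor b=(a_1\lor b_1,\ a_2\land b_2,\ (\sim a_1\land b_3)\lor(a_3\land\sim b_1)\lor(a_3\land b_3))$; $a\dot\to b=(a_1\to b_1,\ b_2\land(\sim a_2\lor a_3),\ (\sim a_2\land b_3)\lor(\sim a_2\land a_3\land\sim b_1)\lor(a_3\land b_3)\lor(\sim a_1\land a_3\land\sim b_1))$; $\dot\neg a=(a_2,a_1,a_3)$; $\dot\circ a=(\sim(a_1\land a_2),a_3,a_3\land\sim(a_1\land a_2))$. Designated set $D=\{x:x_1=1\}$. $\Gamma\vDash_{LFI3}\alpha$ iff every homomorphism $h$ from formulas to this algebra with $h[\Gamma]\subseteq D$ has $h(\alpha)\in D$. *)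

theory Defs
  imports Main
begin

datatype fm =
    Var nat
  | Neg fm
  | Circ fm
  | Conj fm fm
  | Disj fm fm
  | Imp fm fm

definition Iff :: "fm \<Rightarrow> fm \<Rightarrow> fm" where
  "Iff a b = Conj (Imp a b) (Imp b a)"

definition SNeg :: "fm \<Rightarrow> fm" where
  "SNeg a = Conj (Neg a) (Circ a)"

inductive mbC_ax :: "fm \<Rightarrow> bool" where
  ax1: "mbC_ax (Imp a (Imp b a))"
| ax2: "mbC_ax (Imp (Imp a b) (Imp (Imp a (Imp b c)) (Imp a c)))"
| ax3: "mbC_ax (Imp a (Imp b (Conj a b)))"
| ax4: "mbC_ax (Imp (Conj a b) a)"
| ax5: "mbC_ax (Imp (Conj a b) b)"
| ax6: "mbC_ax (Imp a (Disj a b))"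
| ax7: "mbC_ax (Imp b (Disj a b))"
| ax8: "mbC_ax (Imp (Imp a c) (Imp (Imp b c) (Imp (Disj a b) c)))"
| ax9: "mbC_ax (Disj a (Imp a b))"
| ax10: "mbC_ax (Disj a (Neg a))"
| bc1: "mbC_ax (Imp (Circ a) (Imp a (Imp (Neg a) b)))"

inductive LFI3_ax :: "fm \<Rightarrow> bool" where
  mbC: "mbC_ax a \<Longrightarrow> LFI3_ax a"
| ciw: "LFI3_ax (Disj (Circ a) (Conj a (Neg a)))"
| ccc: "LFI3_ax (Circ (Circ (Circ a)))"
| cf: "LFI3_ax (Imp (Neg (Neg a)) a)"
| ce: "LFI3_ax (Imp a (Neg (Neg a)))"
| negcircneg: "LFI3_ax (Iff (Neg (Circ (Neg a))) (Neg (Circ a)))"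
| A1: "LFI3_ax (Iff (Neg (Conj a b)) (Disj (Neg a) (Neg b)))"
| A2: "LFI3_ax (Iff (Neg (Disj a b)) (Conj (Neg a) (Neg b)))"
| A3: "LFI3_ax (Iff (Neg (Imp a b))
          (Conj (Neg b) (Disj (SNeg (Neg a)) (Neg (Circ a)))))"
| A4: "LFI3_ax (Iff (Neg (Circ (Conj a b)))
          (Disj (Disj (Conj (SNeg (Neg a)) (Neg (Circ b)))
                      (Conj (Neg (Circ a)) (SNeg (Neg b))))
                (Conj (Neg (Circ a)) (Neg (Circ b)))))"
| A5: "LFI3_ax (Iff (Neg (Circ (Disj a b)))
          (Disj (Disj (Conj (SNeg a) (Neg (Circ b)))
                      (Conj (Neg (Circ a)) (SNeg b)))
                (Conj (Neg (Circ a)) (Neg (Circ b)))))"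
| A6: "LFI3_ax (Iff (Neg (Circ (Imp a b)))
          (Disj (Disj (Disj
              (Conj (SNeg (Neg a)) (Neg (Circ b)))
              (Conj (Conj (SNeg (Neg a)) (Neg (Circ a))) (SNeg b)))
              (Conj (Neg (Circ a)) (Neg (Circ b))))
              (Conj (Conj (SNeg a) (Neg (Circ a))) (SNeg b))))"

inductive LFI3_derives :: "fm set \<Rightarrow> fm \<Rightarrow> bool" where
  hyp: "a \<in> \<Gamma> \<Longrightarrow> LFI3_derives \<Gamma> a"
| ax: "LFI3_ax a \<Longrightarrow> LFI3_derives \<Gamma> a"
| mp: "LFI3_derives \<Gamma> a \<Longrightarrow> LFI3_derives \<Gamma> (Imp a b) \<Longrightarrow> LFI3_derives \<Gamma> b"

type_synonym tv = "bool \<times> bool \<times> bool"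

definition BB :: "tv set" where
  "BB = {(x1, x2, x3). (x1 \<or> x2) \<and> (x3 \<or> \<not> (x1 \<and> x2))}"

fun t_and :: "tv \<Rightarrow> tv \<Rightarrow> tv" where
  "t_and (a1, a2, a3) (b1, b2, b3) =
     (a1 \<and> b1, a2 \<or> b2,
      (\<not> a2 \<and> b3) \<or> (a3 \<and> \<not> b2) \<or> (a3 \<and> b3))"

fun t_or :: "tv \<Rightarrow> tv \<Rightarrow> tv" where
  "t_or (a1, a2, a3) (b1, b2, b3) =
     (a1 \<or> b1, a2 \<and> b2,
      (\<not> a1 \<and> b3) \<or> (a3 \<and> \<not> b1) \<or> (a3 \<and> b3))"

fun t_imp :: "tv \<Rightarrow> tv \<Rightarrow> tv" where
  "t_imp (a1, a2, a3) (b1, b2, b3) =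
     (a1 \<longrightarrow> b1, b2 \<and> (\<not> a2 \<or> a3),
      (\<not> a2 \<and> b3) \<or> (\<not> a2 \<and> a3 \<and> \<not> b1) \<or> (a3 \<and> b3) \<or> (\<not> a1 \<and> a3 \<and> \<not> b1))"

fun t_neg :: "tv \<Rightarrow> tv" where
  "t_neg (a1, a2, a3) = (a2, a1, a3)"

fun t_circ :: "tv \<Rightarrow> tv" where
  "t_circ (a1, a2, a3) = (\<not> (a1 \<and> a2), a3, a3 \<and> \<not> (a1 \<and> a2))"

definition designated :: "tv set" where
  "designated = {x. fst x}"

text \<open>Homomorphisms from the formula algebra into the LFI3 algebra are exactly the
  extensions of assignments of elements of BB to the variables.\<close>

fun eval :: "(nat \<Rightarrow> tv) \<Rightarrow> fm \<Rightarrow> tv" where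
  "eval v (Var n) = v n"
| "eval v (Neg a) = t_neg (eval v a)"
| "eval v (Circ a) = t_circ (eval v a)"
| "eval v (Conj a b) = t_and (eval v a) (eval v b)"
| "eval v (Disj a b) = t_or (eval v a) (eval v b)"
| "eval v (Imp a b) = t_imp (eval v a) (eval v b)"

definition LFI3_entails :: "fm set \<Rightarrow> fm \<Rightarrow> bool" where
  "LFI3_entails \<Gamma> a \<longleftrightarrow>
     (\<forall>v. (\<forall>n. v n \<in> BB) \<longrightarrow>
        (\<forall>g\<in>\<Gamma>. eval v g \<in> designated) \<longrightarrow> eval v a \<in> designated)"

end

theory Submission
  imports Defs
begin

text \<open>Soundness: every valuation into the five values of \<open>BB\<close> designates every axiom, and
  modus ponens preserves designation since the first component of \<open>t_imp\<close> is Boolean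
  implication. Completeness: if \<open>\<Gamma>\<close> does not derive \<open>\<alpha>\<close>, Zorn's lemma extends \<open>\<Gamma>\<close> to a set
  \<open>\<Delta>\<close> maximal among the sets not deriving \<open>\<alpha>\<close>. Such a \<open>\<Delta>\<close> is closed under derivation and
  treats \<open>\<and>, \<or>, \<rightarrow>\<close> classically, and \<open>\<phi> \<mapsto> (\<phi> \<in> \<Delta>, \<not>\<phi> \<in> \<Delta>, \<not>\<circ>\<phi> \<in> \<Delta>)\<close> takes values in
  \<open>BB\<close> and commutes with the connectives: the axioms \<open>\<not>\<not>\<alpha> \<leftrightarrow> \<alpha>\<close> and A1--A3 describe the
  second component, \<open>\<circ>\<circ>\<circ>\<alpha>\<close>, \<open>\<not>\<circ>\<not>\<alpha> \<leftrightarrow> \<not>\<circ>\<alpha>\<close> and A4--A6 the third. This valuation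
  designates exactly \<open>\<Delta>\<close>, hence all of \<open>\<Gamma>\<close> but not \<open>\<alpha>\<close>.\<close>

lemma BB_eq:
  "BB = {(True, False, False), (True, False, True), (False, True, False),
         (False, True, True), (True, True, True)}"
  by (auto simp: BB_def)

lemma eval_in_BB: "(\<And>n. v n \<in> BB) \<Longrightarrow> eval v \<phi> \<in> BB"
  by (induction \<phi>) (auto simp: BB_eq)

lemma fst_t_imp: "fst (t_imp x y) \<longleftrightarrow> (fst x \<longrightarrow> fst y)"
  by (cases x; cases y) simp

lemmas matrix_simps = BB_eq designated_def Iff_def SNeg_def

lemma mbC_ax_designated:
  assumes "mbC_ax \<phi>" and "\<And>n. v n \<in> BB"
  shows "eval v \<phi> \<in> designated"
proof -
  have in_BB: "eval v \<psi> \<in> BB" for \<psi>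
    using assms(2) by (rule eval_in_BB)
  from assms(1) show ?thesis
  proof (induction rule: mbC_ax.induct)
    case (ax1 a b) show ?case using in_BB[of a] in_BB[of b] by (auto simp: matrix_simps)
  next
    case (ax2 a b c) show ?case using in_BB[of a] in_BB[of b] in_BB[of c] by (auto simp: matrix_simps)
  next
    case (ax3 a b) show ?case using in_BB[of a] in_BB[of b] by (auto simp: matrix_simps)
  next
    case (ax4 a b) show ?case using in_BB[of a] in_BB[of b] by (auto simp: matrix_simps)
  next
    case (ax5 a b) show ?case using in_BB[of a] in_BB[of b] by (auto simp: matrix_simps)
  next
    case (ax6 a b) show ?case using in_BB[of a] in_BB[of b] by (auto simp: matrix_simps)
  next
    case (ax7 b a) show ?case using in_BB[of a] in_BB[of b] by (auto simp: matrix_simps)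
  next
    case (ax8 a c b) show ?case using in_BB[of a] in_BB[of b] in_BB[of c] by (auto simp: matrix_simps)
  next
    case (ax9 a b) show ?case using in_BB[of a] in_BB[of b] by (auto simp: matrix_simps)
  next
    case (ax10 a) show ?case using in_BB[of a] by (auto simp: matrix_simps)
  next
    case (bc1 a b) show ?case using in_BB[of a] in_BB[of b] by (auto simp: matrix_simps)
  qed
qed

lemma LFI3_ax_designated:
  assumes "LFI3_ax \<phi>" and "\<And>n. v n \<in> BB"
  shows "eval v \<phi> \<in> designated"
proof -
  have in_BB: "eval v \<psi> \<in> BB" for \<psi>
    using assms(2) by (rule eval_in_BB)
  from assms(1) show ?thesis
  proof (induction rule: LFI3_ax.induct)
    case (mbC \<phi>) show ?case using mbC_ax_designated[OF mbC assms(2)] .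
  next
    case (ciw a) show ?case using in_BB[of a] by (auto simp: matrix_simps)
  next
    case (ccc a) show ?case using in_BB[of a] by (auto simp: matrix_simps)
  next
    case (cf a) show ?case using in_BB[of a] by (auto simp: matrix_simps)
  next
    case (ce a) show ?case using in_BB[of a] by (auto simp: matrix_simps)
  next
    case (negcircneg a) show ?case using in_BB[of a] by (auto simp: matrix_simps)
  next
    case (A1 a b) show ?case using in_BB[of a] in_BB[of b] by (auto simp: matrix_simps)
  next
    case (A2 a b) show ?case using in_BB[of a] in_BB[of b] by (auto simp: matrix_simps)
  next
    case (A3 a b) show ?case using in_BB[of a] in_BB[of b] by (auto simp: matrix_simps)
  next
    case (A4 a b) show ?case using in_BB[of a] in_BB[of b] by (auto simp: matrix_simps)
  next
    case (A5 a b) show ?case using in_BB[of a] in_BB[of b] by (auto simp: matrix_simps)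
  next
    case (A6 a b) show ?case using in_BB[of a] in_BB[of b] by (auto simp: matrix_simps)
  qed
qed

lemma LFI3_sound: "LFI3_derives \<Gamma> \<phi> \<Longrightarrow> LFI3_entails \<Gamma> \<phi>"
  unfolding LFI3_entails_def
proof (induction rule: LFI3_derives.induct)
  case (ax \<phi> \<Gamma>)
  then show ?case by (blast intro: LFI3_ax_designated)
qed (auto simp: designated_def fst_t_imp)

lemma LFI3_derives_mono: "LFI3_derives \<Gamma> \<phi> \<Longrightarrow> \<Gamma> \<subseteq> \<Delta> \<Longrightarrow> LFI3_derives \<Delta> \<phi>"
  by (induction rule: LFI3_derives.induct) (auto intro: LFI3_derives.intros)

lemma LFI3_derives_mbC_ax: "mbC_ax \<phi> \<Longrightarrow> LFI3_derives \<Gamma> \<phi>"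
  by (intro LFI3_derives.ax LFI3_ax.mbC)

lemma LFI3_derives_imp_self: "LFI3_derives \<Gamma> (Imp \<phi> \<phi>)"
proof -
  have "LFI3_derives \<Gamma> (Imp (Imp \<phi> (Imp \<phi> \<phi>)) (Imp (Imp \<phi> (Imp (Imp \<phi> \<phi>) \<phi>)) (Imp \<phi> \<phi>)))"
    by (intro LFI3_derives_mbC_ax mbC_ax.ax2)
  moreover have "LFI3_derives \<Gamma> (Imp \<phi> (Imp \<phi> \<phi>))" "LFI3_derives \<Gamma> (Imp \<phi> (Imp (Imp \<phi> \<phi>) \<phi>))"
    by (intro LFI3_derives_mbC_ax mbC_ax.ax1)+
  ultimately show ?thesis by (blast intro: LFI3_derives.mp)
qed

lemma LFI3_deduction: "LFI3_derives (insert \<phi> \<Gamma>) \<psi> \<Longrightarrow> LFI3_derives \<Gamma> (Imp \<phi> \<psi>)"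
proof (induction "insert \<phi> \<Gamma>" \<psi> rule: LFI3_derives.induct)
  case (hyp \<psi>)
  show ?case
  proof (cases "\<psi> = \<phi>")
    case True
    then show ?thesis by (simp add: LFI3_derives_imp_self)
  next
    case False
    with hyp have "LFI3_derives \<Gamma> \<psi>" by (auto intro: LFI3_derives.hyp)
    then show ?thesis by (blast intro: LFI3_derives.mp LFI3_derives_mbC_ax mbC_ax.ax1)
  qed
next
  case (ax \<psi>)
  then have "LFI3_derives \<Gamma> \<psi>" by (rule LFI3_derives.ax)
  then show ?case by (blast intro: LFI3_derives.mp LFI3_derives_mbC_ax mbC_ax.ax1)
next
  case (mp \<psi> \<chi>)
  then show ?case by (blast intro: LFI3_derives.mp LFI3_derives_mbC_ax mbC_ax.ax2)
qed

lemma LFI3_derives_finite_subset: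
  assumes "LFI3_derives \<Gamma> \<phi>"
  obtains F where "finite F" "F \<subseteq> \<Gamma>" "LFI3_derives F \<phi>"
proof -
  from assms have "\<exists>F. finite F \<and> F \<subseteq> \<Gamma> \<and> LFI3_derives F \<phi>"
  proof (induction rule: LFI3_derives.induct)
    case (hyp \<phi> \<Gamma>)
    then show ?case by (blast intro: LFI3_derives.hyp)
  next
    case (ax \<phi> \<Gamma>)
    then show ?case by (blast intro: LFI3_derives.ax)
  next
    case (mp \<Gamma> \<phi> \<psi>)
    then obtain F G where "finite F" "F \<subseteq> \<Gamma>" "LFI3_derives F \<phi>"
      and "finite G" "G \<subseteq> \<Gamma>" "LFI3_derives G (Imp \<phi> \<psi>)" by blast
    then show ?case
      by (intro exI[of _ "F \<union> G"]) (blast intro: LFI3_derives.mp LFI3_derives_mono)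
  qed
  with that show ?thesis by blast
qed

lemma LFI3_derives_Union_chain:
  assumes "LFI3_derives (\<Union>\<C>) \<phi>" and "\<C> \<noteq> {}" and "subset.chain \<A> \<C>"
  shows "\<exists>X\<in>\<C>. LFI3_derives X \<phi>"
proof -
  obtain F where F: "finite F" "F \<subseteq> \<Union>\<C>" "LFI3_derives F \<phi>"
    using assms(1) by (rule LFI3_derives_finite_subset)
  obtain X where "X \<in> \<C>" "F \<subseteq> X"
    using finite_subset_Union_chain[OF F(1,2) assms(2,3)] .
  with F(3) show ?thesis by (blast intro: LFI3_derives_mono)
qed

locale LFI3_saturated =
  fixes \<Delta> :: "fm set" and \<alpha> :: fm
  assumes not_derives: "\<not> LFI3_derives \<Delta> \<alpha>"
    and derives_insert: "\<phi> \<notin> \<Delta> \<Longrightarrow> LFI3_derives (insert \<phi> \<Delta>) \<alpha>"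

lemma LFI3_lindenbaum:
  assumes "\<not> LFI3_derives \<Gamma> \<alpha>"
  obtains \<Delta> where "\<Gamma> \<subseteq> \<Delta>" "LFI3_saturated \<Delta> \<alpha>"
proof -
  let ?A = "{\<Delta>. \<Gamma> \<subseteq> \<Delta> \<and> \<not> LFI3_derives \<Delta> \<alpha>}"
  have "\<exists>M\<in>?A. \<forall>X\<in>?A. M \<subseteq> X \<longrightarrow> X = M"
  proof (rule subset_Zorn_nonempty)
    show "?A \<noteq> {}" using assms by blast
  next
    fix \<C> assume "\<C> \<noteq> {}" and chain: "subset.chain ?A \<C>"
    then have "\<Gamma> \<subseteq> \<Union>\<C>" unfolding subset_chain_def by blast
    moreover have "\<not> LFI3_derives (\<Union>\<C>) \<alpha>"
      using LFI3_derives_Union_chain[OF _ \<open>\<C> \<noteq> {}\<close> chain] chain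
      by (auto simp: subset_chain_def)
    ultimately show "\<Union>\<C> \<in> ?A" by blast
  qed
  then obtain \<Delta> where "\<Delta> \<in> ?A" and maximal: "\<forall>X\<in>?A. \<Delta> \<subseteq> X \<longrightarrow> X = \<Delta>" by blast
  have "LFI3_saturated \<Delta> \<alpha>"
  proof
    show "\<not> LFI3_derives \<Delta> \<alpha>" using \<open>\<Delta> \<in> ?A\<close> by blast
    fix \<phi> assume "\<phi> \<notin> \<Delta>"
    then have "insert \<phi> \<Delta> \<notin> ?A" using maximal by blast
    with \<open>\<Delta> \<in> ?A\<close> show "LFI3_derives (insert \<phi> \<Delta>) \<alpha>" by blast
  qed
  with \<open>\<Delta> \<in> ?A\<close> that show ?thesis by blast
qed

definition canonical_value :: "fm set \<Rightarrow> fm \<Rightarrow> tv" where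
  "canonical_value \<Delta> \<phi> = (\<phi> \<in> \<Delta>, Neg \<phi> \<in> \<Delta>, Neg (Circ \<phi>) \<in> \<Delta>)"

context LFI3_saturated
begin

lemma derives_iff_mem: "LFI3_derives \<Delta> \<phi> \<longleftrightarrow> \<phi> \<in> \<Delta>"
proof
  assume "LFI3_derives \<Delta> \<phi>"
  show "\<phi> \<in> \<Delta>"
  proof (rule ccontr)
    assume "\<phi> \<notin> \<Delta>"
    then have "LFI3_derives \<Delta> (Imp \<phi> \<alpha>)" by (intro LFI3_deduction derives_insert)
    with \<open>LFI3_derives \<Delta> \<phi>\<close> show False using not_derives LFI3_derives.mp by blast
  qed
qed (rule LFI3_derives.hyp)

lemma ax_mem: "LFI3_ax \<phi> \<Longrightarrow> \<phi> \<in> \<Delta>"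
  using derives_iff_mem LFI3_derives.ax by blast

lemma mbC_ax_mem: "mbC_ax \<phi> \<Longrightarrow> \<phi> \<in> \<Delta>"
  by (intro ax_mem LFI3_ax.mbC)

lemma mem_mp: "Imp \<phi> \<psi> \<in> \<Delta> \<Longrightarrow> \<phi> \<in> \<Delta> \<Longrightarrow> \<psi> \<in> \<Delta>"
  using derives_iff_mem LFI3_derives.mp by blast

lemma mem_Disj [simp]: "Disj \<phi> \<psi> \<in> \<Delta> \<longleftrightarrow> \<phi> \<in> \<Delta> \<or> \<psi> \<in> \<Delta>"
proof
  assume "Disj \<phi> \<psi> \<in> \<Delta>"
  show "\<phi> \<in> \<Delta> \<or> \<psi> \<in> \<Delta>"
  proof (rule ccontr)
    assume "\<not> (\<phi> \<in> \<Delta> \<or> \<psi> \<in> \<Delta>)"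
    then have "LFI3_derives \<Delta> (Imp \<phi> \<alpha>)" "LFI3_derives \<Delta> (Imp \<psi> \<alpha>)"
      by (auto intro: LFI3_deduction derives_insert)
    moreover have "LFI3_derives \<Delta> (Imp (Imp \<phi> \<alpha>) (Imp (Imp \<psi> \<alpha>) (Imp (Disj \<phi> \<psi>) \<alpha>)))"
      by (intro LFI3_derives_mbC_ax mbC_ax.ax8)
    ultimately have "LFI3_derives \<Delta> \<alpha>"
      using \<open>Disj \<phi> \<psi> \<in> \<Delta>\<close> by (meson LFI3_derives.hyp LFI3_derives.mp)
    with not_derives show False ..
  qed
next
  assume "\<phi> \<in> \<Delta> \<or> \<psi> \<in> \<Delta>"
  then show "Disj \<phi> \<psi> \<in> \<Delta>"
    using mem_mp mbC_ax_mem[OF mbC_ax.ax6] mbC_ax_mem[OF mbC_ax.ax7] by blast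
qed

lemma mem_Imp [simp]: "Imp \<phi> \<psi> \<in> \<Delta> \<longleftrightarrow> (\<phi> \<in> \<Delta> \<longrightarrow> \<psi> \<in> \<Delta>)"
  using mem_mp mbC_ax_mem[OF mbC_ax.ax1, of \<psi> \<phi>] mbC_ax_mem[OF mbC_ax.ax9, of \<phi> \<psi>] by auto

lemma mem_Conj [simp]: "Conj \<phi> \<psi> \<in> \<Delta> \<longleftrightarrow> \<phi> \<in> \<Delta> \<and> \<psi> \<in> \<Delta>"
  using mbC_ax_mem[OF mbC_ax.ax3, of \<phi> \<psi>] mbC_ax_mem[OF mbC_ax.ax4, of \<phi> \<psi>]
    mbC_ax_mem[OF mbC_ax.ax5, of \<phi> \<psi>]
  by auto

lemma mem_Iff [simp]: "Iff \<phi> \<psi> \<in> \<Delta> \<longleftrightarrow> (\<phi> \<in> \<Delta> \<longleftrightarrow> \<psi> \<in> \<Delta>)"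
  by (auto simp: Iff_def)

lemma mem_or_Neg_mem: "\<phi> \<in> \<Delta> \<or> Neg \<phi> \<in> \<Delta>"
  using mbC_ax_mem[OF mbC_ax.ax10] by simp

lemma mem_Neg_Neg [simp]: "Neg (Neg \<phi>) \<in> \<Delta> \<longleftrightarrow> \<phi> \<in> \<Delta>"
  using ax_mem[OF LFI3_ax.cf, of \<phi>] ax_mem[OF LFI3_ax.ce, of \<phi>] by auto

lemma mem_Circ [simp]: "Circ \<phi> \<in> \<Delta> \<longleftrightarrow> \<not> (\<phi> \<in> \<Delta> \<and> Neg \<phi> \<in> \<Delta>)"
proof -
  \<comment> \<open>bc1 needs a formula outside \<open>\<Delta>\<close> to explode into; \<open>\<alpha>\<close> is one.\<close>
  have "\<alpha> \<notin> \<Delta>" using not_derives derives_iff_mem by blast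
  then show ?thesis
    using mbC_ax_mem[OF mbC_ax.bc1, of \<phi> \<alpha>] ax_mem[OF LFI3_ax.ciw, of \<phi>] by auto
qed

lemma canonical_value_in_BB: "canonical_value \<Delta> \<phi> \<in> BB"
  using mem_or_Neg_mem[of \<phi>] mem_or_Neg_mem[of "Circ \<phi>"]
  by (auto simp: canonical_value_def BB_def)

lemma eval_canonical_value:
  "eval (\<lambda>n. canonical_value \<Delta> (Var n)) \<phi> = canonical_value \<Delta> \<phi>"
proof (induction \<phi>)
  case (Var n)
  then show ?case by simp
next
  case (Neg a)
  then show ?case using ax_mem[OF LFI3_ax.negcircneg, of a] by (simp add: canonical_value_def)
next
  case (Circ a)
  then show ?case using ax_mem[OF LFI3_ax.ccc, of a] mem_or_Neg_mem[of "Circ (Circ a)"]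
    by (auto simp: canonical_value_def)
next
  case (Conj a b)
  then show ?case using ax_mem[OF LFI3_ax.A1, of a b] ax_mem[OF LFI3_ax.A4, of a b]
    mem_or_Neg_mem[of a] mem_or_Neg_mem[of b]
    by (auto simp: canonical_value_def SNeg_def)
next
  case (Disj a b)
  then show ?case using ax_mem[OF LFI3_ax.A2, of a b] ax_mem[OF LFI3_ax.A5, of a b]
    mem_or_Neg_mem[of a] mem_or_Neg_mem[of b]
    by (auto simp: canonical_value_def SNeg_def)
next
  case (Imp a b)
  then show ?case using ax_mem[OF LFI3_ax.A3, of a b] ax_mem[OF LFI3_ax.A6, of a b]
    mem_or_Neg_mem[of a] mem_or_Neg_mem[of b]
    by (auto simp: canonical_value_def SNeg_def)
qed

end

lemma LFI3_complete:
  assumes entails: "LFI3_entails \<Gamma> \<alpha>"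
  shows "LFI3_derives \<Gamma> \<alpha>"
proof (rule ccontr)
  assume "\<not> LFI3_derives \<Gamma> \<alpha>"
  then obtain \<Delta> where "\<Gamma> \<subseteq> \<Delta>" and "LFI3_saturated \<Delta> \<alpha>"
    by (rule LFI3_lindenbaum)
  then interpret LFI3_saturated \<Delta> \<alpha> by simp
  let ?v = "\<lambda>n. canonical_value \<Delta> (Var n)"
  have designated_iff: "eval ?v \<phi> \<in> designated \<longleftrightarrow> \<phi> \<in> \<Delta>" for \<phi>
    unfolding eval_canonical_value by (simp add: canonical_value_def designated_def)
  have "\<forall>n. ?v n \<in> BB"
    by (simp add: canonical_value_in_BB)
  moreover have "\<forall>\<gamma>\<in>\<Gamma>. eval ?v \<gamma> \<in> designated"
    using \<open>\<Gamma> \<subseteq> \<Delta>\<close> by (auto simp only: designated_iff)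
  ultimately have "eval ?v \<alpha> \<in> designated"
    using entails[unfolded LFI3_entails_def, THEN spec[of _ ?v]] by blast
  then have "\<alpha> \<in> \<Delta>"
    by (simp only: designated_iff)
  with not_derives show False by (simp add: derives_iff_mem)
qed

theorem theorem16:
  fixes \<Gamma> :: "fm set" and \<alpha> :: fm
  shows "LFI3_derives \<Gamma> \<alpha> \<longleftrightarrow> LFI3_entails \<Gamma> \<alpha>"
  using LFI3_sound LFI3_complete by blast

end
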